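(* A finite graph $G$ satisfies $\theta(G)=2$ if and only if $G$ is isomorphic to $K_2$ or to $\overline{K_2}$ (equivalently, $|V(G)|=2$).
   Context: All graphs are finite and simple. The distinguishing threshold $\theta(G)$ is the minimum $k$ such that every vertex coloring of $G$ using exactly $k$ colors is distinguishing (no non-identity automorphism maps every vertex to a vertex of the same color); equivalently $\theta(G)=1+\max\{c(\alpha):\alpha\in\mathrm{Aut}(G)\}$, where $c(\alpha)$ is the number of cycles of $\alpha$ as a permutation of $V(G)$ (fixed points count as cycles) and $c(\mathrm{id})=0$. *)

theory Defs
  imports Main
begin

definition simple_graph :: "'a set \<Rightarrow> ('a \<Rightarrow> 'a \<Rightarrow> bool) \<Rightarrow> bool" where
  "simple_graph V E \<longleftrightarrow> finite V \<and> (\<forall>x y. E x y \<longrightarrow> x \<in> V \<and> y \<in> V)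
     \<and> (\<forall>x y. E x y \<longrightarrow> E y x) \<and> (\<forall>x. \<not> E x x)"

definition is_aut :: "'a set \<Rightarrow> ('a \<Rightarrow> 'a \<Rightarrow> bool) \<Rightarrow> ('a \<Rightarrow> 'a) \<Rightarrow> bool" where
  "is_aut V E \<alpha> \<longleftrightarrow> bij_betw \<alpha> V V \<and> (\<forall>x\<in>V. \<forall>y\<in>V. E (\<alpha> x) (\<alpha> y) \<longleftrightarrow> E x y)"

definition distinguishing :: "'a set \<Rightarrow> ('a \<Rightarrow> 'a \<Rightarrow> bool) \<Rightarrow> ('a \<Rightarrow> nat) \<Rightarrow> bool" where
  "distinguishing V E f \<longleftrightarrow>
     \<not> (\<exists>\<alpha>. is_aut V E \<alpha> \<and> (\<exists>v\<in>V. \<alpha> v \<noteq> v) \<and> (\<forall>v\<in>V. f (\<alpha> v) = f v))"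

definition dist_threshold :: "'a set \<Rightarrow> ('a \<Rightarrow> 'a \<Rightarrow> bool) \<Rightarrow> nat" where
  "dist_threshold V E = (LEAST k. k \<ge> 1 \<and>
     (\<forall>f :: 'a \<Rightarrow> nat. card (f ` V) = k \<longrightarrow> distinguishing V E f))"

end

theory Submission
  imports Defs
begin

text \<open>\<open>\<theta>(G) = 2\<close> says that some automorphism \<open>\<alpha>\<close> moves a vertex \<open>v\<close> while every
  2-colouring is distinguishing; on two vertices both hold trivially. On three or more vertices
  a non-distinguishing 2-colouring always exists. If the \<open>\<alpha>\<close>-orbit of \<open>v\<close> is not all of \<open>V\<close>,
  colour the orbit against the rest. Otherwise \<open>\<alpha>\<close> permutes \<open>V = {\<alpha>^i v | i < m}\<close> cyclically
  with \<open>m \<ge> 3\<close>, adjacency of \<open>\<alpha>^i v\<close> and \<open>\<alpha>^j v\<close> is unchanged by shifting \<open>i\<close> and \<open>j\<close>, and so,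
  adjacency being symmetric, the reflection \<open>\<alpha>^i v \<mapsto> \<alpha>^(-i) v\<close> is an automorphism. It fixes
  \<open>v\<close> and moves \<open>\<alpha> v\<close>, hence preserves the colouring of \<open>v\<close> against the rest.\<close>

definition every_colouring_distinguishing :: "'a set \<Rightarrow> ('a \<Rightarrow> 'a \<Rightarrow> bool) \<Rightarrow> nat \<Rightarrow> bool" where
  "every_colouring_distinguishing V E k \<longleftrightarrow>
     (\<forall>f :: 'a \<Rightarrow> nat. card (f ` V) = k \<longrightarrow> distinguishing V E f)"

lemma distinguishing_if_inj_on:
  assumes "inj_on f V"
  shows "distinguishing V E f"
  unfolding distinguishing_def
proof clarify
  fix \<alpha> v
  assume "is_aut V E \<alpha>" "v \<in> V" "\<alpha> v \<noteq> v" "\<forall>v\<in>V. f (\<alpha> v) = f v"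
  moreover from this have "\<alpha> v \<in> V"
    unfolding is_aut_def using bij_betwE by blast
  ultimately show False
    using assms unfolding inj_on_def by blast
qed

lemma every_colouring_distinguishing_card:
  assumes "finite V"
  shows "every_colouring_distinguishing V E (card V)"
  unfolding every_colouring_distinguishing_def
  using assms by (auto simp: inj_on_iff_eq_card intro: distinguishing_if_inj_on)

lemma not_distinguishing_if_invariant:
  assumes "is_aut V E \<alpha>" "v \<in> V" "\<alpha> v \<noteq> v" "\<forall>x\<in>V. f (\<alpha> x) = f x"
  shows "\<not> distinguishing V E f"
  using assms unfolding distinguishing_def by blast

lemma dist_threshold_eq_2_iff:
  assumes "finite V"
  shows "dist_threshold V E = 2 \<longleftrightarrow>
    \<not> every_colouring_distinguishing V E 1 \<and> every_colouring_distinguishing V E 2"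
proof -
  define P where "P k \<longleftrightarrow> k \<ge> 1 \<and> every_colouring_distinguishing V E k" for k
  have threshold: "dist_threshold V E = (LEAST k. P k)"
    unfolding dist_threshold_def P_def every_colouring_distinguishing_def ..
  have witness: "P (card V + 1)"
    unfolding P_def every_colouring_distinguishing_def
  proof (intro conjI allI impI)
    fix f :: "'a \<Rightarrow> nat"
    assume "card (f ` V) = card V + 1"
    then show "distinguishing V E f"
      using card_image_le[OF assms, of f] by simp
  qed simp
  have "(LEAST k. P k) = 2 \<longleftrightarrow> \<not> P 1 \<and> P 2"
  proof
    assume "(LEAST k. P k) = 2"
    then show "\<not> P 1 \<and> P 2"
      using LeastI[of P, OF witness] not_less_Least[of 1 P] by auto
  next
    assume P12: "\<not> P 1 \<and> P 2"
    show "(LEAST k. P k) = 2"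
    proof (rule Least_equality)
      fix k
      assume "P k"
      with P12 show "2 \<le> k"
        by (cases "k = 1") (auto simp: P_def)
    qed (use P12 in simp)
  qed
  then show ?thesis
    unfolding threshold P_def by simp
qed

lemma every_colouring_distinguishing_1_iff:
  "every_colouring_distinguishing V E 1 \<longleftrightarrow> (\<forall>\<alpha>. is_aut V E \<alpha> \<longrightarrow> (\<forall>v\<in>V. \<alpha> v = v))"
proof (intro iffI allI impI ballI)
  fix \<alpha> v
  assume "every_colouring_distinguishing V E 1" "is_aut V E \<alpha>" "v \<in> V"
  moreover from \<open>v \<in> V\<close> have "card ((\<lambda>_. 0 :: nat) ` V) = 1"
    by (simp add: image_constant)
  ultimately show "\<alpha> v = v"
    unfolding every_colouring_distinguishing_def distinguishing_def by blast
next
  assume "\<forall>\<alpha>. is_aut V E \<alpha> \<longrightarrow> (\<forall>v\<in>V. \<alpha> v = v)"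
  then show "every_colouring_distinguishing V E 1"
    unfolding every_colouring_distinguishing_def distinguishing_def by blast
qed

lemma invariant_set_not_every_colouring_distinguishing_2:
  assumes "is_aut V E \<alpha>" "v \<in> V" "\<alpha> v \<noteq> v"
    and "x \<in> V" "x \<in> S" "y \<in> V" "y \<notin> S"
    and invariant: "\<forall>z\<in>V. \<alpha> z \<in> S \<longleftrightarrow> z \<in> S"
  shows "\<not> every_colouring_distinguishing V E 2"
proof -
  define f where "f z = (if z \<in> S then 0 else 1 :: nat)" for z
  have "f ` V = {0, 1}"
    using assms(4-7) unfolding f_def by (auto intro: image_eqI[of _ _ x] image_eqI[of _ _ y])
  moreover have "\<not> distinguishing V E f"
    using assms(1-3) invariant by (intro not_distinguishing_if_invariant) (auto simp: f_def)
  ultimately show ?thesis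
    unfolding every_colouring_distinguishing_def by (metis card_2_iff zero_neq_one)
qed

lemma is_aut_funpow:
  assumes "is_aut V E \<alpha>"
  shows "is_aut V E (\<alpha> ^^ k)"
proof (induction k)
  case 0
  show ?case by (simp add: is_aut_def bij_betw_def)
next
  case (Suc k)
  have "bij_betw (\<alpha> ^^ Suc k) V V"
    using Suc assms unfolding is_aut_def by (auto intro: bij_betw_trans)
  moreover have "E ((\<alpha> ^^ Suc k) x) ((\<alpha> ^^ Suc k) y) \<longleftrightarrow> E x y" if "x \<in> V" "y \<in> V" for x y
  proof -
    have "(\<alpha> ^^ k) x \<in> V" "(\<alpha> ^^ k) y \<in> V"
      using Suc that unfolding is_aut_def by (auto dest: bij_betwE)
    then show ?thesis
      using Suc assms that unfolding is_aut_def by simp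
  qed
  ultimately show ?case
    unfolding is_aut_def by blast
qed

lemma swap_is_aut:
  assumes "simple_graph {a, b} E" "a \<noteq> b"
  shows "is_aut {a, b} E (\<lambda>x. if x = a then b else a)"
proof -
  have "bij_betw (\<lambda>x. if x = a then b else a) {a, b} {a, b}"
    by (rule bij_betw_byWitness[where f' = "\<lambda>x. if x = a then b else a"]) (use assms(2) in auto)
  moreover have "E b a \<longleftrightarrow> E a b" "\<not> E a a" "\<not> E b b"
    using assms(1) unfolding simple_graph_def by blast+
  ultimately show ?thesis
    unfolding is_aut_def using assms(2) by auto
qed

lemma funpow_orbit_subset:
  assumes "bij_betw \<alpha> V V" "v \<in> V"
  shows "range (\<lambda>i. (\<alpha> ^^ i) v) \<subseteq> V"
proof -
  have "(\<alpha> ^^ i) v \<in> V" for i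
    using assms by (induction i) (auto dest: bij_betwE)
  then show ?thesis by blast
qed

lemma funpow_orbit_period:
  assumes "bij_betw \<alpha> V V" "finite V" "v \<in> V"
  obtains m where "0 < m" "\<And>i j. (\<alpha> ^^ i) v = (\<alpha> ^^ j) v \<longleftrightarrow> i mod m = j mod m"
proof -
  define g where "g i = (\<alpha> ^^ i) v" for i
  have g_in_V: "g i \<in> V" for i
    using funpow_orbit_subset[OF assms(1,3)] unfolding g_def by blast
  have g_cancel: "g (i + k) = g (j + k) \<Longrightarrow> g i = g j" for i j k
  proof (induction k)
    case (Suc k)
    then show ?case
      using bij_betw_imp_inj_on[OF assms(1)] g_in_V unfolding inj_on_def g_def by simp
  qed simp
  have "\<not> inj g"
    using finite_subset[OF _ assms(2)] g_in_V by (metis finite_imageD image_subset_iff infinite_UNIV_nat)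
  then obtain i j where "i < j" "g i = g j"
    unfolding inj_def by (metis linorder_neqE_nat)
  then have "g (j - i) = g 0"
    using g_cancel[of 0 i "j - i"] by simp
  then have returns: "\<exists>m. 0 < m \<and> g m = v"
    using \<open>i < j\<close> zero_less_diff unfolding g_def by (metis funpow_0)
  define m where "m = (LEAST m. 0 < m \<and> g m = v)"
  have m: "0 < m" "g m = v"
    using LeastI_ex[OF returns] unfolding m_def by auto
  have m_least: "g k \<noteq> v" if "0 < k" "k < m" for k
    using not_less_Least[of k] that unfolding m_def by blast
  have periodic: "(\<alpha> ^^ (m * q)) v = v" for q
    using m(2) by (induction q) (simp_all add: g_def funpow_add)
  have g_mod: "g i = g (i mod m)" for i
  proof -
    have "g i = (\<alpha> ^^ (i mod m + m * (i div m))) v"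
      by (simp add: g_def)
    also have "\<dots> = g (i mod m)"
      unfolding funpow_add g_def using periodic by simp
    finally show ?thesis .
  qed
  have g_ne: "g r \<noteq> g s" if "r < s" "s < m" for r s
  proof
    assume "g r = g s"
    then have "g (s - r) = v"
      using g_cancel[of 0 r "s - r"] that by (simp add: g_def)
    then show False
      using m_least[of "s - r"] that by simp
  qed
  show thesis
  proof (rule that)
    show "0 < m" by (fact m)
    show "(\<alpha> ^^ i) v = (\<alpha> ^^ j) v \<longleftrightarrow> i mod m = j mod m" for i j
      using g_mod[of i] g_mod[of j] g_ne[of "i mod m" "j mod m"] g_ne[of "j mod m" "i mod m"] \<open>0 < m\<close>
      unfolding g_def by (cases "i mod m" "j mod m" rule: linorder_cases) auto
  qed
qed

lemma bij_betw_funpow_orbit_period: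
  assumes "0 < m" "\<And>i j. (\<alpha> ^^ i) v = (\<alpha> ^^ j) v \<longleftrightarrow> i mod m = j mod m"
  shows "bij_betw (\<lambda>i. (\<alpha> ^^ i) v) {..<m} (range (\<lambda>i. (\<alpha> ^^ i) v))"
  unfolding bij_betw_def inj_on_def
  using assms by (auto simp: image_iff intro!: exI[of _ "_ mod m"])

lemma funpow_orbit_invariant:
  assumes bij: "bij_betw \<alpha> V V" and "v \<in> V" "0 < m" "(\<alpha> ^^ m) v = v" "z \<in> V"
  shows "\<alpha> z \<in> range (\<lambda>i. (\<alpha> ^^ i) v) \<longleftrightarrow> z \<in> range (\<lambda>i. (\<alpha> ^^ i) v)"
proof
  assume "\<alpha> z \<in> range (\<lambda>i. (\<alpha> ^^ i) v)"
  then obtain i where i: "\<alpha> z = (\<alpha> ^^ i) v"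
    by blast
  obtain n where n: "i + m = Suc n"
    using \<open>0 < m\<close> by (cases "i + m") auto
  have "\<alpha> ((\<alpha> ^^ n) v) = (\<alpha> ^^ (i + m)) v"
    unfolding n by simp
  also have "\<dots> = \<alpha> z"
    using i \<open>(\<alpha> ^^ m) v = v\<close> by (simp add: funpow_add)
  finally have "z = (\<alpha> ^^ n) v"
    using bij_betw_imp_inj_on[OF bij] funpow_orbit_subset[OF bij \<open>v \<in> V\<close>] \<open>z \<in> V\<close>
    unfolding inj_on_def by blast
  then show "z \<in> range (\<lambda>i. (\<alpha> ^^ i) v)"
    by blast
next
  assume "z \<in> range (\<lambda>i. (\<alpha> ^^ i) v)"
  then obtain i where "z = (\<alpha> ^^ i) v"
    by blast
  then have "\<alpha> z = (\<alpha> ^^ Suc i) v"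
    by simp
  then show "\<alpha> z \<in> range (\<lambda>i. (\<alpha> ^^ i) v)"
    by blast
qed

lemma reflection_of_cyclic_aut:
  assumes sym: "\<And>x y. E x y \<Longrightarrow> E y x"
    and aut: "is_aut V E \<alpha>" and "0 < m"
    and period: "\<And>i j. (\<alpha> ^^ i) v = (\<alpha> ^^ j) v \<longleftrightarrow> i mod m = j mod m"
    and V: "V = range (\<lambda>i. (\<alpha> ^^ i) v)"
  obtains \<beta> where "is_aut V E \<beta>" "\<beta> v = v" "\<beta> (\<alpha> v) = (\<alpha> ^^ (m - 1)) v"
proof -
  define g where "g i = (\<alpha> ^^ i) v" for i
  have g_eq: "g i = g j \<longleftrightarrow> i mod m = j mod m" for i j
    unfolding g_def by (rule period)
  have g_add_period: "g (k + m) = g k" for k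
    by (simp add: g_eq)
  have g_inj: "inj_on g {..<m}" and V_eq: "V = g ` {..<m}"
    using bij_betw_funpow_orbit_period[of m \<alpha> v] \<open>0 < m\<close> period
    unfolding bij_betw_def V g_def by auto
  define idx where "idx = the_inv_into {..<m} g"
  have idx_g: "idx (g k) = k mod m" for k
  proof -
    have "g k = g (k mod m)" by (simp add: g_eq)
    then show ?thesis
      unfolding idx_def using the_inv_into_f_f[OF g_inj] \<open>0 < m\<close> by simp
  qed
  define \<beta> where "\<beta> x = g (m - idx x)" for x
  have \<beta>_g: "\<beta> (g k) = g (m - k mod m)" for k
    by (simp add: \<beta>_def idx_g)
  have g_in_V: "g k \<in> V" for k
    by (simp add: V g_def)
  have \<beta>_in_V: "\<beta> x \<in> V" for x
    by (simp add: \<beta>_def g_in_V)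
  have \<beta>_involution: "\<beta> (\<beta> x) = x" if x: "x \<in> V" for x
  proof -
    obtain k where "x = g k" "k < m" using x V_eq by auto
    then show ?thesis
      by (cases "k = 0") (simp_all add: \<beta>_g g_eq)
  qed
  have shift: "E (g (k + i)) (g (k + j)) \<longleftrightarrow> E (g i) (g j)" for i j k
    using is_aut_funpow[OF aut, of k] g_in_V unfolding is_aut_def g_def by (simp add: funpow_add)
  have \<beta>_edges: "E (\<beta> x) (\<beta> y) \<longleftrightarrow> E x y" if xy: "x \<in> V" "y \<in> V" for x y
  proof -
    obtain i j where ij: "x = g i" "y = g j" "i < m" "j < m" using xy V_eq by auto
    have "E (\<beta> x) (\<beta> y) \<longleftrightarrow> E (g (m - i)) (g (m - j))"
      using ij by (simp add: \<beta>_g)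
    also have "\<dots> \<longleftrightarrow> E (g (i + j + (m - i))) (g (i + j + (m - j)))"
      by (rule shift[symmetric])
    also have "\<dots> \<longleftrightarrow> E (g j) (g i)"
      using ij g_add_period by simp
    also have "\<dots> \<longleftrightarrow> E x y"
      using ij sym by blast
    finally show ?thesis .
  qed
  show thesis
  proof (rule that)
    have "bij_betw \<beta> V V"
      by (rule bij_betw_byWitness[where f' = \<beta>]) (auto simp: \<beta>_involution \<beta>_in_V)
    then show "is_aut V E \<beta>"
      unfolding is_aut_def using \<beta>_edges by blast
    show "\<beta> v = v"
      using \<beta>_g[of 0] g_add_period[of 0] by (simp add: g_def)
    show "\<beta> (\<alpha> v) = (\<alpha> ^^ (m - 1)) v"
      using \<beta>_g[of 1] g_eq[of 1 0] by (cases "m = 1") (simp_all add: g_def)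
  qed
qed

lemma nontrivial_aut_not_every_colouring_distinguishing_2:
  assumes G: "simple_graph V E" and "3 \<le> card V"
    and aut: "is_aut V E \<alpha>" and v: "v \<in> V" "\<alpha> v \<noteq> v"
  shows "\<not> every_colouring_distinguishing V E 2"
proof -
  have sym: "\<And>x y. E x y \<Longrightarrow> E y x" and "finite V"
    using G unfolding simple_graph_def by blast+
  have bij: "bij_betw \<alpha> V V"
    using aut unfolding is_aut_def by blast
  obtain m where "0 < m" and period: "\<And>i j. (\<alpha> ^^ i) v = (\<alpha> ^^ j) v \<longleftrightarrow> i mod m = j mod m"
    using funpow_orbit_period[OF bij \<open>finite V\<close> v(1)] by blast
  define orbit where "orbit = range (\<lambda>i. (\<alpha> ^^ i) v)"
  show ?thesis
  proof (cases "orbit = V")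
    case False
    then obtain y where y: "y \<in> V" "y \<notin> orbit"
      using funpow_orbit_subset[OF bij v(1)] unfolding orbit_def by blast
    have "\<alpha> z \<in> orbit \<longleftrightarrow> z \<in> orbit" if "z \<in> V" for z
      using funpow_orbit_invariant[OF bij v(1) \<open>0 < m\<close> _ that] period[of m 0] unfolding orbit_def by simp
    moreover have "v \<in> orbit"
      unfolding orbit_def by (metis funpow_0 rangeI)
    ultimately show ?thesis
      using invariant_set_not_every_colouring_distinguishing_2[OF aut v _ _ y] v(1) by blast
  next
    case True
    have "card V = m"
      using bij_betw_same_card[OF bij_betw_funpow_orbit_period[OF \<open>0 < m\<close> period]] True
      unfolding orbit_def by simp
    then have "3 \<le> m"
      using assms(2) by simp
    obtain \<beta> where \<beta>: "is_aut V E \<beta>" "\<beta> v = v" "\<beta> (\<alpha> v) = (\<alpha> ^^ (m - 1)) v"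
      using reflection_of_cyclic_aut[OF sym aut \<open>0 < m\<close> period] True unfolding orbit_def by metis
    have "\<beta> (\<alpha> v) \<noteq> \<alpha> v"
      using \<beta>(3) period[of "m - 1" 1] \<open>3 \<le> m\<close> by simp
    moreover have "\<alpha> v \<in> V"
      using bij v(1) by (simp add: bij_betwE)
    moreover have "\<beta> z \<in> {v} \<longleftrightarrow> z \<in> {v}" if "z \<in> V" for z
      using \<beta>(1,2) v(1) that unfolding is_aut_def bij_betw_def inj_on_def by auto
    ultimately show ?thesis
      using invariant_set_not_every_colouring_distinguishing_2[OF \<beta>(1), where S = "{v}"] v by blast
  qed
qed

lemma dist_threshold_eq_2_iff_card_eq_2:
  assumes "simple_graph V E"
  shows "dist_threshold V E = 2 \<longleftrightarrow> card V = 2"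
proof -
  have "finite V"
    using assms unfolding simple_graph_def by blast
  show ?thesis
  proof
    assume "dist_threshold V E = 2"
    then obtain \<alpha> v where aut: "is_aut V E \<alpha>" "v \<in> V" "\<alpha> v \<noteq> v"
      using dist_threshold_eq_2_iff[OF \<open>finite V\<close>] every_colouring_distinguishing_1_iff by blast
    then have "{v, \<alpha> v} \<subseteq> V"
      unfolding is_aut_def by (auto dest: bij_betwE)
    then have "card {v, \<alpha> v} \<le> card V"
      by (rule card_mono[OF \<open>finite V\<close>])
    then have "2 \<le> card V"
      using aut(3) by simp
    moreover have "\<not> 3 \<le> card V"
      using nontrivial_aut_not_every_colouring_distinguishing_2[OF assms _ aut] \<open>dist_threshold V E = 2\<close>
        dist_threshold_eq_2_iff[OF \<open>finite V\<close>] by blast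
    ultimately show "card V = 2"
      by simp
  next
    assume "card V = 2"
    then obtain a b where "a \<noteq> b" "V = {a, b}"
      by (meson card_2_iff)
    moreover from this have "is_aut V E (\<lambda>x. if x = a then b else a)"
      using swap_is_aut[of a b E] assms by simp
    ultimately have "\<not> every_colouring_distinguishing V E 1"
      unfolding every_colouring_distinguishing_1_iff by auto
    then show "dist_threshold V E = 2"
      using every_colouring_distinguishing_card[OF \<open>finite V\<close>] \<open>card V = 2\<close>
        dist_threshold_eq_2_iff[OF \<open>finite V\<close>] by simp
  qed
qed

theorem mainTheorem4:
  fixes V :: "'a set" and E :: "'a \<Rightarrow> 'a \<Rightarrow> bool"
  assumes "simple_graph V E"
  shows "dist_threshold V E = 2 \<longleftrightarrow>
    ((\<exists>a b. a \<noteq> b \<and> V = {a, b} \<and> E a b) \<or> (\<exists>a b. a \<noteq> b \<and> V = {a, b} \<and> \<not> E a b))"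
  unfolding dist_threshold_eq_2_iff_card_eq_2[OF assms] by (auto simp: card_2_iff)

end
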